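(* If a tiling $T$ contains a triple $ijk$ (with $i<j<k$), then $T$ contains a dense triple $(\ell-1)\,\ell\,(\ell+1)$ for some $\ell$ with $i<\ell<k$.
   Context: Fix an integer $n\ge 3$ and write $[n]=\{1,\dots,n\}$. Let $\Lambda$ be the set of 3-element subsets of $[n]$; a triple $\{i,j,k\}$ with $i<j<k$ is written $ijk$. For a 4-element subset $F=\{i<j<k<l\}$ of $[n]$, the stick of $F$ is the sequence $(ijk,\ ijl,\ ikl,\ jkl)$. A tiling (the inversion set of a rhombus tiling of the zonogon $Z(n;2)$) is a subset $T\subseteq\Lambda$ such that for every 4-element $F\subseteq[n]$, $T\cap\mathrm{stick}(F)$ is an initial segment or a final segment of the stick (empty set and whole stick allowed). *)

theory Defs
  imports Main
begin

definition Lambda :: "nat \<Rightarrow> nat set set" where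
  "Lambda n = {S. S \<subseteq> {1..n} \<and> card S = 3}"

definition stick :: "nat \<Rightarrow> nat \<Rightarrow> nat \<Rightarrow> nat \<Rightarrow> nat set list" where
  "stick i j k l = [{i,j,k}, {i,j,l}, {i,k,l}, {j,k,l}]"

definition segment_cond :: "nat set set \<Rightarrow> nat set list \<Rightarrow> bool" where
  "segment_cond T s \<longleftrightarrow>
     (\<exists>m \<le> length s. T \<inter> set s = set (take m s) \<or> T \<inter> set s = set (drop m s))"

definition tiling :: "nat \<Rightarrow> nat set set \<Rightarrow> bool" where
  "tiling n T \<longleftrightarrow> T \<subseteq> Lambda n \<and>
     (\<forall>i j k l. 1 \<le> i \<and> i < j \<and> j < k \<and> k < l \<and> l \<le> n \<longrightarrow>
        segment_cond T (stick i j k l))"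

end

theory Submission
  imports Defs
begin

text \<open>
  A stick meeting \<open>T\<close> in a nonempty initial or final segment has its first or last entry
  in \<open>T\<close>. If \<open>k - i > 2\<close>, the triple \<open>ijk\<close> lies on the stick of \<open>{i, i + 1, j, k}\<close>
  (if \<open>j - i \<ge> 2\<close>) or of \<open>{i, j, j + 1, k}\<close> (otherwise), whose first and last entries
  are triples inside \<open>[i, k]\<close> of smaller span. Induction on the span \<open>k - i\<close> ends at
  span 2, i.e. at a dense triple.
\<close>

lemma segment_cond_imp_end:
  assumes "segment_cond T xs" "T \<inter> set xs \<noteq> {}"
  shows "hd xs \<in> T \<or> last xs \<in> T"
proof -
  obtain m where "T \<inter> set xs = set (take m xs) \<or> T \<inter> set xs = set (drop m xs)"
    using assms(1) unfolding segment_cond_def by blast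
  then show ?thesis
  proof
    assume seg: "T \<inter> set xs = set (take m xs)"
    with assms(2) have "take m xs \<noteq> []" by auto
    then have "hd (take m xs) = hd xs" by simp
    with \<open>take m xs \<noteq> []\<close> seg show ?thesis by (metis IntD1 hd_in_set)
  next
    assume seg: "T \<inter> set xs = set (drop m xs)"
    with assms(2) have "drop m xs \<noteq> []" by auto
    then have "last (drop m xs) = last xs" by simp
    with \<open>drop m xs \<noteq> []\<close> seg show ?thesis by (metis IntD1 last_in_set)
  qed
qed

lemma tiling_stick_end:
  assumes "tiling n T" "1 \<le> a" "a < b" "b < c" "c < e" "e \<le> n"
    and "X \<in> set (stick a b c e)" "X \<in> T"
  shows "{a, b, c} \<in> T \<or> {b, c, e} \<in> T"
proof -
  have "segment_cond T (stick a b c e)"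
    using assms(1-6) unfolding tiling_def by blast
  moreover have "T \<inter> set (stick a b c e) \<noteq> {}"
    using assms(7,8) by blast
  ultimately have "hd (stick a b c e) \<in> T \<or> last (stick a b c e) \<in> T"
    by (rule segment_cond_imp_end)
  then show ?thesis by (simp add: stick_def)
qed

lemma tiling_triple_bounds:
  assumes "tiling n T" "{i, j, k} \<in> T" "i < j" "j < k"
  shows "1 \<le> i" "k \<le> n"
  using assms unfolding tiling_def Lambda_def by auto

lemma tiling_narrower_triple:
  assumes "tiling n T" "i < j" "j < k" "{i, j, k} \<in> T" "i + 2 < k"
  obtains i' j' k' where "i \<le> i'" "i' < j'" "j' < k'" "k' \<le> k" "k' - i' < k - i"
    and "{i', j', k'} \<in> T"
proof -
  note bounds = tiling_triple_bounds[OF assms(1,4,2,3)]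
  show thesis
  proof (cases "i + 2 \<le> j")
    case True
    have "i + 1 < j" using True by linarith
    moreover have "{i, j, k} \<in> set (stick i (i + 1) j k)" by (simp add: stick_def)
    ultimately have "{i, i + 1, j} \<in> T \<or> {i + 1, j, k} \<in> T"
      using tiling_stick_end[OF assms(1) bounds(1) less_add_one _ assms(3) bounds(2) _ assms(4)]
      by blast
    then show thesis
    proof
      assume "{i, i + 1, j} \<in> T"
      then show thesis using True assms(3) by (intro that[of i "i + 1" j]) simp_all
    next
      assume "{i + 1, j, k} \<in> T"
      then show thesis using True assms(3) by (intro that[of "i + 1" j k]) simp_all
    qed
  next
    case False
    have "j + 1 < k" using False assms(5) by linarith
    moreover have "{i, j, k} \<in> set (stick i j (j + 1) k)" by (simp add: stick_def)
    ultimately have "{i, j, j + 1} \<in> T \<or> {j, j + 1, k} \<in> T"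
      using tiling_stick_end[OF assms(1) bounds(1) assms(2) less_add_one _ bounds(2) _ assms(4)]
      by blast
    then show thesis
    proof
      assume "{i, j, j + 1} \<in> T"
      then show thesis using False assms(2,5) by (intro that[of i j "j + 1"]) simp_all
    next
      assume "{j, j + 1, k} \<in> T"
      then show thesis using False assms(2,5) by (intro that[of j "j + 1" k]) simp_all
    qed
  qed
qed

lemma tiling_dense_triple_between:
  assumes "tiling n T" "i < j" "j < k" "{i, j, k} \<in> T"
  shows "\<exists>l. i < l \<and> l < k \<and> {l - 1, l, l + 1} \<in> T"
  using assms(2-4)
proof (induction "k - i" arbitrary: i j k rule: less_induct)
  case less
  show ?case
  proof (cases "k = i + 2")
    case True
    with less.prems have "j = i + 1" by linarith
    with True less.prems(3) have "{j - 1, j, j + 1} \<in> T" by simp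
    with less.prems(1,2) show ?thesis by (intro exI[of _ j] conjI)
  next
    case False
    with less.prems have "i + 2 < k" by linarith
    obtain i' j' k' where "i \<le> i'" "i' < j'" "j' < k'" "k' \<le> k"
      and "k' - i' < k - i" "{i', j', k'} \<in> T"
      by (rule tiling_narrower_triple[OF assms(1) less.prems \<open>i + 2 < k\<close>])
    from less.hyps[OF \<open>k' - i' < k - i\<close> \<open>i' < j'\<close> \<open>j' < k'\<close> \<open>{i', j', k'} \<in> T\<close>]
    obtain l where "i' < l" "l < k'" "{l - 1, l, l + 1} \<in> T"
      by blast
    moreover from \<open>i \<le> i'\<close> \<open>k' \<le> k\<close> \<open>i' < l\<close> \<open>l < k'\<close> have "i < l" "l < k" by linarith+
    ultimately show ?thesis by (intro exI[of _ l] conjI)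
  qed
qed

theorem lemma4:
  fixes n i j k :: nat and T :: "nat set set"
  assumes "n \<ge> 3"
    and "tiling n T"
    and "i < j" and "j < k"
    and "{i, j, k} \<in> T"
  shows "\<exists>l. i < l \<and> l < k \<and> {l - 1, l, l + 1} \<in> T"
  using tiling_dense_triple_between[OF assms(2-5)] .

end
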